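(* Let $q$ be a prime power and $n\ge1$. For $i=1,2$, let $\mathcal{C}_i$ be a $[2n,n,d_i]_q$ linear code with generator matrix $G_i=(I_n\ \ f_i(A_i))$, where $f_i(x)\in\mathbb{F}_q[x]$ and $A_i$ is an $n\times n$ Toeplitz matrix over $\mathbb{F}_q$. Assume that both $\mathcal{C}_1$ and $\mathcal{C}_2$ are Euclidean (resp. Hermitian, with $q$ an even power of a prime) LCD codes. Then for every integer $s\ge1$ there exists a $[4sn,2sn,\min\{d_1,d_2\}]_q$ code that is Euclidean (resp. Hermitian) formally self-dual and Euclidean (resp. Hermitian) LCD.
   Context: A Toeplitz matrix is a square matrix whose diagonals parallel to the main diagonal each have constant entries. Euclidean inner product $\sum_i x_iy_i$; for $q=p^h$ with $h$ even, Hermitian inner product $\sum_i x_iy_i^{\sqrt q}$. A code $\mathcal{C}$ is Euclidean (resp. Hermitian) LCD if $\mathcal{C}\cap\mathcal{C}^{\perp_E}=\{0\}$ (resp. $\mathcal{C}\cap\mathcal{C}^{\perp_H}=\{0\}$), and formally self-dual if it has the same weight distribution as its dual with respect to the given inner product. *)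

theory Defs
  imports "Jordan_Normal_Form.Matrix" "HOL-Computational_Algebra.Polynomial"
begin

definition toeplitz :: "nat \<Rightarrow> 'a mat \<Rightarrow> bool" where
  "toeplitz n A \<longleftrightarrow> A \<in> carrier_mat n n \<and>
     (\<forall>i j i' j'. i < n \<and> j < n \<and> i' < n \<and> j' < n \<and>
        int j - int i = int j' - int i' \<longrightarrow> A $$ (i, j) = A $$ (i', j'))"

definition poly_mat :: "nat \<Rightarrow> 'a::field poly \<Rightarrow> 'a mat \<Rightarrow> 'a mat" where
  "poly_mat n f A = mat n n (\<lambda>(i, j). \<Sum>k\<le>degree f. coeff f k * (A ^\<^sub>m k) $$ (i, j))"

definition id_block :: "nat \<Rightarrow> 'a::field mat \<Rightarrow> 'a mat" where
  "id_block n B = mat n (2 * n) (\<lambda>(i, j). if j < n then (if i = j then 1 else 0) else B $$ (i, j - n))"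

definition row_space :: "'a::field mat \<Rightarrow> 'a vec set" where
  "row_space G = {transpose_mat G *\<^sub>v u | u. u \<in> carrier_vec (dim_row G)}"

definition is_linear_code :: "nat \<Rightarrow> nat \<Rightarrow> 'a::field vec set \<Rightarrow> bool" where
  "is_linear_code N k C \<longleftrightarrow> (\<exists>G \<in> carrier_mat k N.
      (\<forall>u \<in> carrier_vec k. transpose_mat G *\<^sub>v u = 0\<^sub>v N \<longrightarrow> u = 0\<^sub>v k) \<and> C = row_space G)"

definition hweight :: "'a::zero vec \<Rightarrow> nat" where
  "hweight v = card {i. i < dim_vec v \<and> v $ i \<noteq> 0}"

(* minimum distance = minimum weight of a nonzero codeword (linear code) *)
definition min_dist :: "'a::zero vec set \<Rightarrow> nat" where
  "min_dist C = Min {hweight c | c. c \<in> C \<and> c \<noteq> 0\<^sub>v (dim_vec c)}"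

(* sesquilinear form sum_i x_i * sigma(y_i); sigma = id gives the Euclidean,
   sigma = (%y. y ^ sqrt q) the Hermitian inner product *)
definition sform :: "('a \<Rightarrow> 'a) \<Rightarrow> 'a::field vec \<Rightarrow> 'a vec \<Rightarrow> 'a" where
  "sform \<sigma> x y = (\<Sum>i<dim_vec x. x $ i * \<sigma> (y $ i))"

definition dual_code :: "('a \<Rightarrow> 'a) \<Rightarrow> nat \<Rightarrow> 'a::field vec set \<Rightarrow> 'a vec set" where
  "dual_code \<sigma> N C = {v \<in> carrier_vec N. \<forall>c \<in> C. sform \<sigma> c v = 0}"

definition is_LCD :: "('a \<Rightarrow> 'a) \<Rightarrow> nat \<Rightarrow> 'a::field vec set \<Rightarrow> bool" where
  "is_LCD \<sigma> N C \<longleftrightarrow> C \<inter> dual_code \<sigma> N C = {0\<^sub>v N}"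

definition formally_self_dual :: "('a \<Rightarrow> 'a) \<Rightarrow> nat \<Rightarrow> 'a::field vec set \<Rightarrow> bool" where
  "formally_self_dual \<sigma> N C \<longleftrightarrow>
     (\<forall>w. card {c \<in> C. hweight c = w} = card {c \<in> dual_code \<sigma> N C. hweight c = w})"

end

theory Submission
  imports Defs
begin

text \<open>
  A code with generator matrix \<open>(I | B)\<close> has the codewords \<open>(u, B\<^sup>T u)\<close>, and its dual
  (for either inner product, written \<open>\<Sum> x\<^sub>i \<sigma>(y\<^sub>i)\<close>) consists of the \<open>(v\<^sub>1, v\<^sub>2)\<close> with
  \<open>\<sigma>(v\<^sub>1) + B \<sigma>(v\<^sub>2) = 0\<close>. If \<open>J B\<close> is symmetric for a permutation matrix \<open>J\<close> of
  order two, then \<open>(u, B\<^sup>T u) \<mapsto> (\<sigma>(-J B\<^sup>T u), \<sigma>(J u))\<close> is a weight-preserving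
  bijection from the code onto its dual, so the code is formally self-dual; this
  only uses that \<open>\<sigma>\<close> is an involution fixing \<open>0\<close>, which holds for \<open>y \<mapsto> y\<close> and for
  \<open>y \<mapsto> y\<^bsup>\<surd>q\<^esup>\<close>. Toeplitz matrices, and hence polynomials in them, are persymmetric,
  i.e. \<open>J B\<close> is symmetric for the reversal \<open>J\<close>.

  The required code is generated by \<open>(I | diag(B\<^sub>1,\<dots>,B\<^sub>1,B\<^sub>2,\<dots>,B\<^sub>2))\<close> with \<open>s\<close> copies
  of each \<open>B\<^sub>i = f\<^sub>i(A\<^sub>i)\<close>: it is the direct sum of \<open>s\<close> copies of \<open>\<C>\<^sub>1\<close> and of \<open>\<C>\<^sub>2\<close>, hence
  LCD with minimum distance \<open>min d\<^sub>1 d\<^sub>2\<close>, and the blockwise reversal is a symmetry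
  \<open>J\<close> as above.
\<close>

lemma sum_lessThan_add:
  fixes a b :: nat
  shows "(\<Sum>i<a + b. g i) = (\<Sum>i<a. g i) + (\<Sum>j<b. g (a + j))"
  by (induction b) (simp_all add: add.assoc)

lemma sum_lessThan_mult:
  fixes k n :: nat
  shows "(\<Sum>i<k * n. g i) = (\<Sum>t<k. \<Sum>j<n. g (t * n + j))"
proof (induction k)
  case (Suc k)
  have "(\<Sum>i<Suc k * n. g i) = (\<Sum>i<k * n + n. g i)"
    by (simp add: add.commute)
  with Suc show ?case
    by (simp add: sum_lessThan_add)
qed simp

definition nonzero_count :: "nat \<Rightarrow> (nat \<Rightarrow> 'a::zero) \<Rightarrow> nat" where
  "nonzero_count m g = (\<Sum>i<m. if g i = 0 then 0 else 1)"

lemma hweight_eq_nonzero_count: "hweight v = nonzero_count (dim_vec v) (($) v)"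
proof -
  have "{i. i < dim_vec v \<and> v $ i \<noteq> 0} = {i \<in> {..<dim_vec v}. v $ i \<noteq> 0}"
    by auto
  then have "hweight v = (\<Sum>i \<in> {i \<in> {..<dim_vec v}. v $ i \<noteq> 0}. 1)"
    unfolding hweight_def by simp
  also have "\<dots> = nonzero_count (dim_vec v) (($) v)"
    unfolding nonzero_count_def by (subst sum.inter_filter) (auto intro: sum.cong)
  finally show ?thesis .
qed

lemma nonzero_count_cong:
  "(\<And>i. i < m \<Longrightarrow> g i = 0 \<longleftrightarrow> h i = 0) \<Longrightarrow> nonzero_count m g = nonzero_count m h"
  unfolding nonzero_count_def by (rule sum.cong) auto

lemma nonzero_count_double:
  "nonzero_count (2 * m) g = nonzero_count m g + nonzero_count m (\<lambda>j. g (m + j))"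
  unfolding nonzero_count_def mult_2 by (rule sum_lessThan_add)

lemma nonzero_count_blocks:
  "nonzero_count (k * n) g = (\<Sum>t<k. nonzero_count n (\<lambda>j. g (t * n + j)))"
  unfolding nonzero_count_def by (rule sum_lessThan_mult)

lemma nonzero_count_reindex:
  assumes "bij_betw \<pi> {..<m} {..<m}"
  shows "nonzero_count m (\<lambda>i. g (\<pi> i)) = nonzero_count m g"
  unfolding nonzero_count_def using sum.reindex_bij_betw[OF assms] .

section \<open>Codes with generator matrix \<open>(I | B)\<close>\<close>

definition parity_part :: "'a::field mat \<Rightarrow> nat \<Rightarrow> 'a vec \<Rightarrow> 'a vec" where
  "parity_part B m u = vec m (\<lambda>j. \<Sum>k<m. B $$ (k, j) * u $ k)"

definition sys_codeword :: "'a::field mat \<Rightarrow> nat \<Rightarrow> 'a vec \<Rightarrow> 'a vec" where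
  "sys_codeword B m u = vec (2 * m) (\<lambda>i. if i < m then u $ i else parity_part B m u $ (i - m))"

definition sys_code :: "'a::field mat \<Rightarrow> nat \<Rightarrow> 'a vec set" where
  "sys_code B m = sys_codeword B m ` carrier_vec m"

definition sys_dual_eqs :: "('a::field \<Rightarrow> 'a) \<Rightarrow> 'a mat \<Rightarrow> nat \<Rightarrow> 'a vec \<Rightarrow> bool" where
  "sys_dual_eqs \<sigma> B m v \<longleftrightarrow> (\<forall>i<m. \<sigma> (v $ i) + (\<Sum>j<m. B $$ (i, j) * \<sigma> (v $ (m + j))) = 0)"

definition nonzero_weights :: "'a::field mat \<Rightarrow> nat \<Rightarrow> nat set" where
  "nonzero_weights B m = {hweight (sys_codeword B m u) | u. u \<in> carrier_vec m \<and> u \<noteq> 0\<^sub>v m}"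

lemma dim_sys_codeword [simp]: "dim_vec (sys_codeword B m u) = 2 * m"
  by (simp add: sys_codeword_def)

lemma sys_codeword_carrier [simp]: "sys_codeword B m u \<in> carrier_vec (2 * m)"
  by (rule carrier_vecI) simp

lemma sys_codeword_low: "i < m \<Longrightarrow> sys_codeword B m u $ i = u $ i"
  by (simp add: sys_codeword_def)

lemma sys_codeword_high: "j < m \<Longrightarrow> sys_codeword B m u $ (m + j) = parity_part B m u $ j"
  by (simp add: sys_codeword_def)

lemma sys_codeword_zero: "sys_codeword B m (0\<^sub>v m) = 0\<^sub>v (2 * m)"
  by (rule eq_vecI) (auto simp: sys_codeword_def parity_part_def)

lemma sys_codeword_eq_zero_iff:
  assumes "u \<in> carrier_vec m"
  shows "sys_codeword B m u = 0\<^sub>v (2 * m) \<longleftrightarrow> u = 0\<^sub>v m"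
proof
  assume zero: "sys_codeword B m u = 0\<^sub>v (2 * m)"
  show "u = 0\<^sub>v m"
  proof (rule eq_vecI)
    fix i assume "i < dim_vec (0\<^sub>v m :: 'a vec)"
    then show "u $ i = 0\<^sub>v m $ i"
      using zero sys_codeword_low[of i m B u] by auto
  qed (use assms in simp)
qed (simp add: sys_codeword_zero)

lemma hweight_sys_codeword:
  "hweight (sys_codeword B m u) = nonzero_count m (($) u) + nonzero_count m (($) (parity_part B m u))"
proof -
  have "hweight (sys_codeword B m u) = nonzero_count (2 * m) (($) (sys_codeword B m u))"
    by (simp add: hweight_eq_nonzero_count)
  also have "\<dots> = nonzero_count m (($) (sys_codeword B m u))
                + nonzero_count m (\<lambda>j. sys_codeword B m u $ (m + j))"
    by (rule nonzero_count_double)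
  also have "nonzero_count m (($) (sys_codeword B m u)) = nonzero_count m (($) u)"
    by (rule nonzero_count_cong) (simp add: sys_codeword_low)
  also have "nonzero_count m (\<lambda>j. sys_codeword B m u $ (m + j)) = nonzero_count m (($) (parity_part B m u))"
    by (rule nonzero_count_cong) (simp add: sys_codeword_high)
  finally show ?thesis .
qed

lemma transpose_id_block_mult_vec:
  assumes "B \<in> carrier_mat m m" and u: "u \<in> carrier_vec m"
  shows "transpose_mat (id_block m B) *\<^sub>v u = sys_codeword B m u"
proof (rule eq_vecI)
  show "dim_vec (transpose_mat (id_block m B) *\<^sub>v u) = dim_vec (sys_codeword B m u)"
    by (simp add: id_block_def)
  fix i assume "i < dim_vec (sys_codeword B m u)"
  then have i: "i < 2 * m" by simp
  have "(transpose_mat (id_block m B) *\<^sub>v u) $ i = (\<Sum>k<m. id_block m B $$ (k, i) * u $ k)"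
    using i u by (simp add: id_block_def scalar_prod_def lessThan_atLeast0)
  also have "\<dots> = sys_codeword B m u $ i"
  proof (cases "i < m")
    case True
    then have "(\<Sum>k<m. id_block m B $$ (k, i) * u $ k) = (\<Sum>k<m. if k = i then u $ k else 0)"
      by (intro sum.cong) (auto simp: id_block_def)
    with True show ?thesis by (simp add: sys_codeword_def)
  next
    case False
    with i have "(\<Sum>k<m. id_block m B $$ (k, i) * u $ k) = (\<Sum>k<m. B $$ (k, i - m) * u $ k)"
      by (intro sum.cong) (auto simp: id_block_def)
    with False i show ?thesis by (simp add: sys_codeword_def parity_part_def)
  qed
  finally show "(transpose_mat (id_block m B) *\<^sub>v u) $ i = sys_codeword B m u $ i" .
qed

lemma row_space_id_block:
  assumes "B \<in> carrier_mat m m"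
  shows "row_space (id_block m B) = sys_code B m"
proof -
  have "dim_row (id_block m B) = m" by (simp add: id_block_def)
  then show ?thesis
    unfolding row_space_def sys_code_def
    by (simp add: Setcompr_eq_image transpose_id_block_mult_vec[OF assms] cong: image_cong)
qed

lemma is_linear_code_sys_code:
  assumes "B \<in> carrier_mat m m"
  shows "is_linear_code (2 * m) m (sys_code B m)"
  unfolding is_linear_code_def
proof (intro bexI[of _ "id_block m B"] conjI ballI impI)
  show "id_block m B \<in> carrier_mat m (2 * m)" by (simp add: id_block_def)
  show "sys_code B m = row_space (id_block m B)" using row_space_id_block[OF assms] by simp
  fix u :: "'a vec"
  assume "u \<in> carrier_vec m" and "transpose_mat (id_block m B) *\<^sub>v u = 0\<^sub>v (2 * m)"
  then show "u = 0\<^sub>v m"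
    using transpose_id_block_mult_vec[OF assms] sys_codeword_eq_zero_iff by metis
qed

lemma sform_sys_codeword:
  "sform \<sigma> (sys_codeword B m u) v =
     (\<Sum>k<m. u $ k * (\<sigma> (v $ k) + (\<Sum>j<m. B $$ (k, j) * \<sigma> (v $ (m + j)))))"
proof -
  have "sform \<sigma> (sys_codeword B m u) v
      = (\<Sum>i<m. u $ i * \<sigma> (v $ i)) + (\<Sum>j<m. parity_part B m u $ j * \<sigma> (v $ (m + j)))"
    unfolding sform_def dim_sys_codeword mult_2 sum_lessThan_add
    by (simp add: sys_codeword_low sys_codeword_high)
  also have "(\<Sum>j<m. parity_part B m u $ j * \<sigma> (v $ (m + j)))
      = (\<Sum>k<m. \<Sum>j<m. u $ k * (B $$ (k, j) * \<sigma> (v $ (m + j))))"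
    by (subst sum.swap) (simp add: parity_part_def sum_distrib_left sum_distrib_right mult_ac)
  finally show ?thesis
    by (simp add: sum.distrib distrib_left sum_distrib_left)
qed

lemma dual_code_sys_code:
  "dual_code \<sigma> (2 * m) (sys_code B m) = {v \<in> carrier_vec (2 * m). sys_dual_eqs \<sigma> B m v}"
proof (rule Set.set_eqI, rule iffI)
  fix v assume v: "v \<in> dual_code \<sigma> (2 * m) (sys_code B m)"
  have "sys_dual_eqs \<sigma> B m v"
    unfolding sys_dual_eqs_def
  proof (intro allI impI)
    fix i assume i: "i < m"
    have "sform \<sigma> (sys_codeword B m (unit_vec m i)) v = 0"
      using v i unfolding dual_code_def sys_code_def by auto
    with i show "\<sigma> (v $ i) + (\<Sum>j<m. B $$ (i, j) * \<sigma> (v $ (m + j))) = 0"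
      unfolding sform_sys_codeword by (simp add: unit_vec_def of_bool_def[symmetric])
  qed
  with v show "v \<in> {v \<in> carrier_vec (2 * m). sys_dual_eqs \<sigma> B m v}"
    unfolding dual_code_def by auto
qed (auto simp: dual_code_def sys_dual_eqs_def sys_code_def sform_sys_codeword)

lemma is_LCD_sys_code_iff:
  assumes "\<sigma> 0 = 0"
  shows "is_LCD \<sigma> (2 * m) (sys_code B m) \<longleftrightarrow>
     (\<forall>u \<in> carrier_vec m. sys_dual_eqs \<sigma> B m (sys_codeword B m u) \<longrightarrow> u = 0\<^sub>v m)"
proof -
  let ?S = "{u \<in> carrier_vec m. sys_dual_eqs \<sigma> B m (sys_codeword B m u)}"
  have "sys_code B m \<inter> dual_code \<sigma> (2 * m) (sys_code B m) = sys_codeword B m ` ?S"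
    unfolding dual_code_sys_code unfolding sys_code_def by auto
  moreover have "0\<^sub>v m \<in> ?S"
    using assms by (simp add: sys_codeword_zero sys_dual_eqs_def)
  then have "sys_codeword B m ` ?S = {0\<^sub>v (2 * m)} \<longleftrightarrow> (\<forall>u \<in> ?S. sys_codeword B m u = 0\<^sub>v (2 * m))"
  proof (intro iffI)
    assume "\<forall>u \<in> ?S. sys_codeword B m u = 0\<^sub>v (2 * m)"
    then have "sys_codeword B m ` ?S = (\<lambda>_. 0\<^sub>v (2 * m)) ` ?S"
      by (intro image_cong) simp_all
    also have "\<dots> = {0\<^sub>v (2 * m)}"
      using \<open>0\<^sub>v m \<in> ?S\<close> by (rule image_constant)
    finally show "sys_codeword B m ` ?S = {0\<^sub>v (2 * m)}" .
  qed blast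
  moreover have "\<dots> \<longleftrightarrow> (\<forall>u \<in> ?S. u = 0\<^sub>v m)"
    using sys_codeword_eq_zero_iff by blast
  ultimately show ?thesis
    unfolding is_LCD_def by blast
qed

lemma min_dist_sys_code: "min_dist (sys_code B m) = Min (nonzero_weights B m)"
proof -
  have "c \<noteq> 0\<^sub>v (dim_vec c) \<longleftrightarrow> u \<noteq> 0\<^sub>v m"
    if "u \<in> carrier_vec m" and "c = sys_codeword B m u" for c u
    using that sys_codeword_eq_zero_iff by simp
  then have "{hweight c | c. c \<in> sys_code B m \<and> c \<noteq> 0\<^sub>v (dim_vec c)} = nonzero_weights B m"
    unfolding sys_code_def nonzero_weights_def by blast
  then show ?thesis unfolding min_dist_def by simp
qed

lemma finite_nonzero_weights: "finite (nonzero_weights B m)"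
proof (rule finite_subset)
  show "nonzero_weights B m \<subseteq> {..2 * m}"
  proof
    fix w assume "w \<in> nonzero_weights B m"
    then obtain u where "w = hweight (sys_codeword B m u)"
      unfolding nonzero_weights_def by blast
    also have "\<dots> \<le> card {..<2 * m}"
      unfolding hweight_def by (rule card_mono) auto
    finally show "w \<in> {..2 * m}" by simp
  qed
qed simp

lemma nonzero_weights_nonempty:
  assumes "0 < m"
  shows "nonzero_weights B m \<noteq> {}"
proof -
  have "hweight (sys_codeword B m (unit_vec m 0)) \<in> nonzero_weights B m"
    unfolding nonzero_weights_def using unit_vec_carrier unit_vec_nonzero[OF assms] by blast
  then show ?thesis by blast
qed

section \<open>Formal self-duality from a symmetry of \<open>B\<close>\<close>

locale symmetric_sys_code =
  fixes B :: "'a::field mat" and m :: nat and \<pi> :: "nat \<Rightarrow> nat" and \<sigma> :: "'a \<Rightarrow> 'a"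
  assumes perm_less: "\<And>i. i < m \<Longrightarrow> \<pi> i < m"
    and perm_involution: "\<And>i. i < m \<Longrightarrow> \<pi> (\<pi> i) = i"
    and perm_symmetric: "\<And>i j. i < m \<Longrightarrow> j < m \<Longrightarrow> B $$ (\<pi> i, j) = B $$ (\<pi> j, i)"
    and \<sigma>_involution: "\<And>y. \<sigma> (\<sigma> y) = y"
    and \<sigma>_zero: "\<sigma> 0 = 0"
begin

definition to_dual :: "'a vec \<Rightarrow> 'a vec" where
  "to_dual v = vec (2 * m) (\<lambda>i. if i < m then \<sigma> (- v $ (m + \<pi> i)) else \<sigma> (v $ \<pi> (i - m)))"

definition dual_message :: "'a vec \<Rightarrow> 'a vec" where
  "dual_message v = vec m (\<lambda>i. \<sigma> (v $ (m + \<pi> i)))"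

lemma dim_to_dual [simp]: "dim_vec (to_dual v) = 2 * m"
  by (simp add: to_dual_def)

lemma to_dual_low: "i < m \<Longrightarrow> to_dual v $ i = \<sigma> (- v $ (m + \<pi> i))"
  by (simp add: to_dual_def)

lemma to_dual_high: "j < m \<Longrightarrow> to_dual v $ (m + j) = \<sigma> (v $ \<pi> j)"
  by (simp add: to_dual_def)

lemma bij_betw_perm: "bij_betw \<pi> {..<m} {..<m}"
  by (rule bij_betw_byWitness[where f' = \<pi>]) (auto simp: perm_less perm_involution)

lemma sum_perm: "(\<Sum>i<m. g (\<pi> i)) = (\<Sum>i<m. g i)"
  by (rule sum.reindex_bij_betw[OF bij_betw_perm])

lemma \<sigma>_eq_zero_iff: "\<sigma> a = 0 \<longleftrightarrow> a = 0"
  by (metis \<sigma>_involution \<sigma>_zero)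

lemma parity_part_perm:
  assumes "i < m"
  shows "parity_part B m u $ \<pi> i = (\<Sum>k<m. B $$ (i, k) * u $ \<pi> k)"
proof -
  have "parity_part B m u $ \<pi> i = (\<Sum>k<m. B $$ (\<pi> k, \<pi> i) * u $ \<pi> k)"
    using assms perm_less sum_perm[of "\<lambda>k. B $$ (k, \<pi> i) * u $ k"]
    by (simp add: parity_part_def)
  also have "\<dots> = (\<Sum>k<m. B $$ (i, k) * u $ \<pi> k)"
  proof (rule sum.cong)
    fix k assume "k \<in> {..<m}"
    with assms show "B $$ (\<pi> k, \<pi> i) * u $ \<pi> k = B $$ (i, k) * u $ \<pi> k"
      using perm_symmetric[of k "\<pi> i"] by (simp add: perm_less perm_involution)
  qed simp
  finally show ?thesis .
qed

lemma to_dual_in_dual_code: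
  "to_dual (sys_codeword B m u) \<in> dual_code \<sigma> (2 * m) (sys_code B m)"
proof -
  let ?v = "to_dual (sys_codeword B m u)"
  have low: "\<sigma> (?v $ i) = - (\<Sum>k<m. B $$ (i, k) * u $ \<pi> k)" if "i < m" for i
  proof -
    have "\<sigma> (?v $ i) = - parity_part B m u $ \<pi> i"
      using that perm_less[OF that] by (simp add: to_dual_low sys_codeword_high \<sigma>_involution)
    with that show ?thesis by (simp add: parity_part_perm)
  qed
  have high: "(\<Sum>j<m. B $$ (i, j) * \<sigma> (?v $ (m + j))) = (\<Sum>j<m. B $$ (i, j) * u $ \<pi> j)" for i
    by (rule sum.cong) (simp_all add: to_dual_high sys_codeword_low perm_less \<sigma>_involution)
  have "\<sigma> (?v $ i) + (\<Sum>j<m. B $$ (i, j) * \<sigma> (?v $ (m + j))) = 0" if "i < m" for i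
    unfolding low[OF that] high by (rule left_minus)
  then have "sys_dual_eqs \<sigma> B m ?v"
    unfolding sys_dual_eqs_def by (intro allI impI)
  then show ?thesis
    using carrier_vecI[of ?v "2 * m"] unfolding dual_code_sys_code by simp
qed

lemma hweight_to_dual: "hweight (to_dual (sys_codeword B m u)) = hweight (sys_codeword B m u)"
proof -
  let ?v = "to_dual (sys_codeword B m u)"
  have "hweight ?v = nonzero_count m (($) ?v) + nonzero_count m (\<lambda>j. ?v $ (m + j))"
    by (simp add: hweight_eq_nonzero_count nonzero_count_double)
  also have "nonzero_count m (($) ?v) = nonzero_count m (\<lambda>i. parity_part B m u $ \<pi> i)"
    by (rule nonzero_count_cong) (simp add: to_dual_low sys_codeword_high perm_less \<sigma>_eq_zero_iff)
  also have "\<dots> = nonzero_count m (($) (parity_part B m u))"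
    by (rule nonzero_count_reindex[OF bij_betw_perm])
  also have "nonzero_count m (\<lambda>j. ?v $ (m + j)) = nonzero_count m (\<lambda>j. u $ \<pi> j)"
    by (rule nonzero_count_cong) (simp add: to_dual_high sys_codeword_low perm_less \<sigma>_eq_zero_iff)
  also have "\<dots> = nonzero_count m (($) u)"
    by (rule nonzero_count_reindex[OF bij_betw_perm])
  finally show ?thesis
    by (simp add: hweight_sys_codeword)
qed

lemma inj_on_to_dual: "inj_on to_dual (sys_code B m)"
proof (rule inj_onI)
  fix x y assume "x \<in> sys_code B m" "y \<in> sys_code B m" and eq: "to_dual x = to_dual y"
  then obtain u u' where u: "u \<in> carrier_vec m" "x = sys_codeword B m u"
    and u': "u' \<in> carrier_vec m" "y = sys_codeword B m u'"
    unfolding sys_code_def by blast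
  have "u = u'"
  proof (rule eq_vecI)
    fix i assume "i < dim_vec u'"
    with u' have i: "i < m" by simp
    have "to_dual x $ (m + \<pi> i) = to_dual y $ (m + \<pi> i)" using eq by simp
    then have "\<sigma> (u $ i) = \<sigma> (u' $ i)"
      using i perm_less[OF i] perm_less[OF perm_less[OF i]]
      by (simp add: u u' to_dual_high sys_codeword_low perm_involution)
    then show "u $ i = u' $ i" by (metis \<sigma>_involution)
  qed (use u u' in simp)
  with u u' show "x = y" by simp
qed

lemma to_dual_dual_message:
  assumes v: "v \<in> dual_code \<sigma> (2 * m) (sys_code B m)"
  shows "to_dual (sys_codeword B m (dual_message v)) = v"
proof (rule eq_vecI)
  have v_carrier: "v \<in> carrier_vec (2 * m)" and eqs: "sys_dual_eqs \<sigma> B m v"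
    using v unfolding dual_code_sys_code by auto
  fix i assume "i < dim_vec v"
  with v_carrier consider "i < m" | j where "j < m" "i = m + j"
    by (metis add_diff_inverse_nat carrier_vecD mult_2 nat_add_left_cancel_less)
  then show "to_dual (sys_codeword B m (dual_message v)) $ i = v $ i"
  proof cases
    case 1
    have "parity_part B m (dual_message v) $ \<pi> i = (\<Sum>k<m. B $$ (i, k) * \<sigma> (v $ (m + k)))"
      using 1 perm_less by (simp add: parity_part_perm dual_message_def perm_involution)
    also have "\<dots> = - \<sigma> (v $ i)"
    proof -
      have "\<sigma> (v $ i) + (\<Sum>k<m. B $$ (i, k) * \<sigma> (v $ (m + k))) = 0"
        using eqs 1 unfolding sys_dual_eqs_def by (elim allE impE)
      then show ?thesis by (rule add.inverse_unique[symmetric])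
    qed
    finally show ?thesis
      using 1 perm_less[OF 1] by (simp add: to_dual_low sys_codeword_high \<sigma>_involution)
  next
    case 2
    then show ?thesis
      using perm_less[OF 2(1)]
      by (simp add: to_dual_high sys_codeword_low dual_message_def perm_involution \<sigma>_involution)
  qed
qed (use v in \<open>auto simp: dual_code_def\<close>)

theorem formally_self_dual_sys_code: "formally_self_dual \<sigma> (2 * m) (sys_code B m)"
  unfolding formally_self_dual_def
proof
  fix w
  let ?C = "{c \<in> sys_code B m. hweight c = w}"
  let ?D = "{d \<in> dual_code \<sigma> (2 * m) (sys_code B m). hweight d = w}"
  have image: "to_dual ` ?C = ?D"
  proof
    show "to_dual ` ?C \<subseteq> ?D"
    proof
      fix d assume "d \<in> to_dual ` ?C"
      then obtain u where "d = to_dual (sys_codeword B m u)" "hweight (sys_codeword B m u) = w"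
        unfolding sys_code_def by blast
      then show "d \<in> ?D"
        using to_dual_in_dual_code hweight_to_dual by simp
    qed
    show "?D \<subseteq> to_dual ` ?C"
    proof
      fix d assume d: "d \<in> ?D"
      let ?c = "sys_codeword B m (dual_message d)"
      have "d = to_dual ?c"
        using d to_dual_dual_message by simp
      moreover have "dual_message d \<in> carrier_vec m"
        by (simp add: dual_message_def)
      then have "?c \<in> ?C"
        using d hweight_to_dual[of "dual_message d"] \<open>d = to_dual ?c\<close>
        unfolding sys_code_def by simp
      ultimately show "d \<in> to_dual ` ?C" by blast
    qed
  qed
  have "inj_on to_dual ?C"
    by (rule inj_on_subset[OF inj_on_to_dual]) blast
  then show "card ?C = card ?D"
    unfolding image[symmetric] by (rule card_image[symmetric])
qed

end

section \<open>Persymmetric matrices\<close>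

definition persymmetric :: "nat \<Rightarrow> 'a mat \<Rightarrow> bool" where
  "persymmetric n A \<longleftrightarrow> (\<forall>i<n. \<forall>j<n. A $$ (j, i) = A $$ (n - 1 - i, n - 1 - j))"

lemma persymmetricD:
  "persymmetric n A \<Longrightarrow> i < n \<Longrightarrow> j < n \<Longrightarrow> A $$ (j, i) = A $$ (n - 1 - i, n - 1 - j)"
  unfolding persymmetric_def by blast

lemma toeplitz_imp_persymmetric:
  assumes "toeplitz n A"
  shows "persymmetric n A"
  unfolding persymmetric_def
proof (intro allI impI)
  fix i j assume i: "i < n" and j: "j < n"
  have diagonal: "A $$ (a, b) = A $$ (c, d)"
    if "a < n" "b < n" "c < n" "d < n" "int b - int a = int d - int c" for a b c d
    using assms that unfolding toeplitz_def by blast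
  from i j show "A $$ (j, i) = A $$ (n - 1 - i, n - 1 - j)"
    by (intro diagonal) auto
qed

lemma index_mult_mat_sum:
  assumes "A \<in> carrier_mat n n" "B \<in> carrier_mat n n" "i < n" "j < n"
  shows "(A * B) $$ (i, j) = (\<Sum>l<n. A $$ (i, l) * B $$ (l, j))"
  using assms by (simp add: scalar_prod_def lessThan_atLeast0)

lemma persymmetric_mult:
  fixes A B :: "'a::comm_semiring_1 mat"
  assumes A: "A \<in> carrier_mat n n" and B: "B \<in> carrier_mat n n"
    and "persymmetric n A" "persymmetric n B" and commute: "A * B = B * A"
  shows "persymmetric n (A * B)"
  unfolding persymmetric_def
proof (intro allI impI)
  fix i j assume i: "i < n" and j: "j < n"
  have "(A * B) $$ (j, i) = (\<Sum>l<n. A $$ (j, l) * B $$ (l, i))"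
    by (rule index_mult_mat_sum[OF A B j i])
  also have "\<dots> = (\<Sum>l<n. B $$ (n - 1 - i, n - 1 - l) * A $$ (n - 1 - l, n - 1 - j))"
  proof (rule sum.cong)
    fix l assume "l \<in> {..<n}"
    then have l: "l < n" by simp
    show "A $$ (j, l) * B $$ (l, i) = B $$ (n - 1 - i, n - 1 - l) * A $$ (n - 1 - l, n - 1 - j)"
      unfolding persymmetricD[OF assms(3) l j] persymmetricD[OF assms(4) i l] by (rule mult.commute)
  qed simp
  also have "\<dots> = (\<Sum>l<n. B $$ (n - 1 - i, l) * A $$ (l, n - 1 - j))"
    using sum.nat_diff_reindex[of "\<lambda>l. B $$ (n - 1 - i, l) * A $$ (l, n - 1 - j)" n] by simp
  also have "\<dots> = (B * A) $$ (n - 1 - i, n - 1 - j)"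
    using i j by (intro index_mult_mat_sum[symmetric, OF B A]) auto
  finally show "(A * B) $$ (j, i) = (A * B) $$ (n - 1 - i, n - 1 - j)"
    by (simp only: commute)
qed

lemma pow_mat_commute:
  assumes A: "A \<in> carrier_mat n n"
  shows "A ^\<^sub>m k * A = A * A ^\<^sub>m k"
proof (induction k)
  case 0
  with A show ?case by simp
next
  case (Suc k)
  have "A ^\<^sub>m Suc k * A = (A * A ^\<^sub>m k) * A"
    using Suc by simp
  also have "\<dots> = A * (A ^\<^sub>m k * A)"
    using A by (intro assoc_mult_mat) auto
  finally show ?case by simp
qed

lemma persymmetric_pow_mat:
  fixes A :: "'a::comm_semiring_1 mat"
  assumes A: "A \<in> carrier_mat n n" and "persymmetric n A"
  shows "persymmetric n (A ^\<^sub>m k)"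
proof (induction k)
  case 0
  with A show ?case by (auto simp: persymmetric_def)
next
  case (Suc k)
  then show ?case
    using persymmetric_mult[OF pow_carrier_mat[OF A] A Suc assms(2) pow_mat_commute[OF A]]
    by simp
qed

lemma persymmetric_poly_mat:
  assumes A: "A \<in> carrier_mat n n" and "persymmetric n A"
  shows "persymmetric n (poly_mat n f A)"
  unfolding persymmetric_def
proof (intro allI impI)
  fix i j assume i: "i < n" and j: "j < n"
  then show "poly_mat n f A $$ (j, i) = poly_mat n f A $$ (n - 1 - i, n - 1 - j)"
    unfolding poly_mat_def
    by (simp add: persymmetricD[OF persymmetric_pow_mat[OF assms] i j] del: pow_mat.simps)
qed

lemma persymmetric_reversal_symmetric:
  assumes "persymmetric n B" "i < n" "j < n"
  shows "B $$ (n - 1 - i, j) = B $$ (n - 1 - j, i)"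
  using persymmetricD[OF assms(1) assms(3), of "n - 1 - i"] assms(2) by simp

section \<open>Block-diagonal generator matrices\<close>

locale block_diag_code =
  fixes n K :: nat and blocks :: "nat \<Rightarrow> 'a::field mat"
  assumes n_pos: "0 < n" and blocks_carrier: "\<And>t. blocks t \<in> carrier_mat n n"
begin

definition M :: nat where
  "M = K * n"

definition blockdiag :: "'a mat" where
  "blockdiag = mat M M (\<lambda>(i, j).
     if i div n = j div n then blocks (i div n) $$ (i mod n, j mod n) else 0)"

definition block :: "nat \<Rightarrow> 'a vec \<Rightarrow> 'a vec" where
  "block t u = vec n (\<lambda>i. u $ (t * n + i))"

definition embed :: "nat \<Rightarrow> 'a vec \<Rightarrow> 'a vec" where
  "embed t w = vec M (\<lambda>i. if i div n = t then w $ (i mod n) else 0)"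

definition rev_index :: "nat \<Rightarrow> nat" where
  "rev_index I = I div n * n + (n - 1 - I mod n)"

lemma blockdiag_carrier: "blockdiag \<in> carrier_mat M M"
  by (simp add: blockdiag_def)

lemma block_carrier: "block t u \<in> carrier_vec n"
  by (simp add: block_def)

lemma block_index_div: "i < n \<Longrightarrow> (t * n + i) div n = t"
  using n_pos by simp

lemma block_index_less: "t < K \<Longrightarrow> i < n \<Longrightarrow> t * n + i < M"
proof -
  assume "t < K" "i < n"
  then have "t * n + i < Suc t * n" by simp
  also have "\<dots> \<le> K * n" using \<open>t < K\<close> by (intro mult_right_mono) auto
  finally show ?thesis by (simp add: M_def)
qed

lemma block_index_cases:
  assumes "I < M"
  obtains t i where "t < K" "i < n" "I = t * n + i"
proof
  show "I div n < K" using assms n_pos by (simp add: M_def less_mult_imp_div_less)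
  show "I mod n < n" using n_pos by simp
qed simp

lemma blockdiag_index:
  "t < K \<Longrightarrow> i < n \<Longrightarrow> t' < K \<Longrightarrow> j < n \<Longrightarrow>
   blockdiag $$ (t * n + i, t' * n + j) = (if t = t' then blocks t $$ (i, j) else 0)"
  using block_index_less[of t i] block_index_less[of t' j]
  by (simp add: blockdiag_def block_index_div)

lemma sum_blockdiag_col:
  assumes t: "t < K" and j: "j < n"
  shows "(\<Sum>k<M. blockdiag $$ (k, t * n + j) * g k) = (\<Sum>k<n. blocks t $$ (k, j) * g (t * n + k))"
proof -
  have "(\<Sum>k<M. blockdiag $$ (k, t * n + j) * g k)
      = (\<Sum>t'<K. \<Sum>k<n. blockdiag $$ (t' * n + k, t * n + j) * g (t' * n + k))"
    unfolding M_def by (rule sum_lessThan_mult)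
  also have "\<dots> = (\<Sum>t'<K. if t' = t then \<Sum>k<n. blocks t $$ (k, j) * g (t * n + k) else 0)"
    by (rule sum.cong) (auto simp: blockdiag_index t j)
  finally show ?thesis using t by simp
qed

lemma sum_blockdiag_row:
  assumes t: "t < K" and i: "i < n"
  shows "(\<Sum>j<M. blockdiag $$ (t * n + i, j) * g j) = (\<Sum>j<n. blocks t $$ (i, j) * g (t * n + j))"
proof -
  have "(\<Sum>j<M. blockdiag $$ (t * n + i, j) * g j)
      = (\<Sum>t'<K. \<Sum>j<n. blockdiag $$ (t * n + i, t' * n + j) * g (t' * n + j))"
    unfolding M_def by (rule sum_lessThan_mult)
  also have "\<dots> = (\<Sum>t'<K. if t' = t then \<Sum>j<n. blocks t $$ (i, j) * g (t * n + j) else 0)"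
    by (rule sum.cong) (auto simp: blockdiag_index t i)
  finally show ?thesis using t by simp
qed

lemma block_parity_part:
  "t < K \<Longrightarrow> block t (parity_part blockdiag M u) = parity_part (blocks t) n (block t u)"
  by (rule eq_vecI) (auto simp: block_def parity_part_def block_index_less sum_blockdiag_col)

lemma hweight_blockdiag:
  "hweight (sys_codeword blockdiag M u) = (\<Sum>t<K. hweight (sys_codeword (blocks t) n (block t u)))"
proof -
  have "nonzero_count M (($) u) = (\<Sum>t<K. nonzero_count n (($) (block t u)))"
    unfolding M_def nonzero_count_blocks
    by (intro sum.cong refl nonzero_count_cong) (simp add: block_def)
  moreover have "nonzero_count M (($) (parity_part blockdiag M u))
      = (\<Sum>t<K. nonzero_count n (($) (parity_part (blocks t) n (block t u))))"
    unfolding M_def nonzero_count_blocks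
  proof (rule sum.cong)
    fix t assume "t \<in> {..<K}"
    then have t: "t < K" by simp
    show "nonzero_count n (\<lambda>j. parity_part blockdiag (K * n) u $ (t * n + j))
        = nonzero_count n (($) (parity_part (blocks t) n (block t u)))"
      using block_parity_part[OF t, of u]
      by (intro nonzero_count_cong) (metis M_def block_def index_vec)
  qed simp
  ultimately show ?thesis
    by (simp add: hweight_sys_codeword sum.distrib)
qed

lemma sys_dual_eqs_block:
  assumes t: "t < K" and eqs: "sys_dual_eqs \<sigma> blockdiag M (sys_codeword blockdiag M u)"
  shows "sys_dual_eqs \<sigma> (blocks t) n (sys_codeword (blocks t) n (block t u))"
  unfolding sys_dual_eqs_def
proof (intro allI impI)
  fix i assume i: "i < n"
  let ?c = "sys_codeword blockdiag M u" and ?c\<^sub>t = "sys_codeword (blocks t) n (block t u)"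
  have ti: "t * n + i < M" using block_index_less[OF t i] .
  have "(\<Sum>j<M. blockdiag $$ (t * n + i, j) * \<sigma> (?c $ (M + j)))
      = (\<Sum>j<n. blocks t $$ (i, j) * \<sigma> (?c $ (M + (t * n + j))))"
    by (rule sum_blockdiag_row[OF t i])
  also have "\<dots> = (\<Sum>j<n. blocks t $$ (i, j) * \<sigma> (?c\<^sub>t $ (n + j)))"
  proof (rule sum.cong)
    fix j assume "j \<in> {..<n}"
    then have j: "j < n" by simp
    have "?c $ (M + (t * n + j)) = block t (parity_part blockdiag M u) $ j"
      using block_index_less[OF t j] j by (simp add: sys_codeword_high block_def)
    also have "\<dots> = ?c\<^sub>t $ (n + j)"
      using j by (simp add: block_parity_part[OF t] sys_codeword_high)
    finally show "blocks t $$ (i, j) * \<sigma> (?c $ (M + (t * n + j))) = blocks t $$ (i, j) * \<sigma> (?c\<^sub>t $ (n + j))"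
      by simp
  qed simp
  moreover have "?c $ (t * n + i) = ?c\<^sub>t $ i"
    using ti i by (simp add: sys_codeword_low block_def)
  moreover have "\<sigma> (?c $ (t * n + i)) + (\<Sum>j<M. blockdiag $$ (t * n + i, j) * \<sigma> (?c $ (M + j))) = 0"
    using eqs ti unfolding sys_dual_eqs_def by (elim allE impE)
  ultimately show "\<sigma> (?c\<^sub>t $ i) + (\<Sum>j<n. blocks t $$ (i, j) * \<sigma> (?c\<^sub>t $ (n + j))) = 0"
    by simp
qed

lemma eq_zero_if_blocks_zero:
  assumes u: "u \<in> carrier_vec M" and zero: "\<And>t. t < K \<Longrightarrow> block t u = 0\<^sub>v n"
  shows "u = 0\<^sub>v M"
proof (rule eq_vecI)
  fix I assume "I < dim_vec (0\<^sub>v M :: 'a vec)"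
  then obtain t i where ti: "t < K" "i < n" "I = t * n + i"
    using block_index_cases by auto
  have "u $ I = block t u $ i"
    using ti by (simp add: block_def)
  with zero[OF ti(1)] ti show "u $ I = 0\<^sub>v M $ I"
    using block_index_less by simp
qed (use u in simp)

theorem is_LCD_blockdiag:
  assumes "\<sigma> 0 = 0" and LCD: "\<And>t. t < K \<Longrightarrow> is_LCD \<sigma> (2 * n) (sys_code (blocks t) n)"
  shows "is_LCD \<sigma> (2 * M) (sys_code blockdiag M)"
  unfolding is_LCD_sys_code_iff[where \<sigma> = \<sigma>, OF assms(1)]
proof (intro ballI impI)
  fix u :: "'a vec"
  assume u: "u \<in> carrier_vec M" and eqs: "sys_dual_eqs \<sigma> blockdiag M (sys_codeword blockdiag M u)"
  show "u = 0\<^sub>v M"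
  proof (rule eq_zero_if_blocks_zero[OF u])
    fix t assume t: "t < K"
    show "block t u = 0\<^sub>v n"
      using LCD[OF t] sys_dual_eqs_block[OF t eqs] block_carrier
      unfolding is_LCD_sys_code_iff[where \<sigma> = \<sigma>, OF assms(1)] by blast
  qed
qed

lemma block_embed:
  "w \<in> carrier_vec n \<Longrightarrow> t < K \<Longrightarrow> t' < K \<Longrightarrow> block t' (embed t w) = (if t' = t then w else 0\<^sub>v n)"
  by (rule eq_vecI) (auto simp: block_def embed_def block_index_less block_index_div)

lemma hweight_embed:
  assumes w: "w \<in> carrier_vec n" and t: "t < K"
  shows "hweight (sys_codeword blockdiag M (embed t w)) = hweight (sys_codeword (blocks t) n w)"
proof -
  have "hweight (sys_codeword blockdiag M (embed t w))
      = (\<Sum>t'<K. if t' = t then hweight (sys_codeword (blocks t) n w) else 0)"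
    unfolding hweight_blockdiag
    by (rule sum.cong) (simp_all add: block_embed[OF w t] sys_codeword_zero hweight_def)
  with t show ?thesis by simp
qed

lemma embed_carrier: "embed t w \<in> carrier_vec M"
  by (simp add: embed_def)

lemma embed_nonzero:
  assumes "w \<in> carrier_vec n" "w \<noteq> 0\<^sub>v n" "t < K"
  shows "embed t w \<noteq> 0\<^sub>v M"
proof
  assume "embed t w = 0\<^sub>v M"
  then have "block t (embed t w) = block t (0\<^sub>v M)" by simp
  moreover have "block t (0\<^sub>v M) = (0\<^sub>v n :: 'a vec)"
    using assms(3) by (intro eq_vecI) (auto simp: block_def block_index_less)
  ultimately show False
    using block_embed[OF assms(1,3,3)] assms(2) by simp
qed

theorem min_dist_blockdiag:
  assumes "0 < K"
  shows "min_dist (sys_code blockdiag M) = (MIN t\<in>{..<K}. min_dist (sys_code (blocks t) n))"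
proof -
  let ?W = "nonzero_weights blockdiag M" and ?d = "\<lambda>t. Min (nonzero_weights (blocks t) n)"
  have below: "\<exists>t<K. ?d t \<le> x" if x: "x \<in> ?W" for x
  proof -
    obtain u where u: "u \<in> carrier_vec M" "u \<noteq> 0\<^sub>v M" "x = hweight (sys_codeword blockdiag M u)"
      using x unfolding nonzero_weights_def by blast
    then obtain t where t: "t < K" "block t u \<noteq> 0\<^sub>v n"
      using eq_zero_if_blocks_zero by blast
    have "hweight (sys_codeword (blocks t) n (block t u)) \<in> nonzero_weights (blocks t) n"
      unfolding nonzero_weights_def using t(2) block_carrier by blast
    then have "?d t \<le> hweight (sys_codeword (blocks t) n (block t u))"
      by (rule Min_le[OF finite_nonzero_weights])
    also have "\<dots> \<le> x"
      unfolding u(3) hweight_blockdiag using t(1) by (intro member_le_sum) auto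
    finally show ?thesis using t(1) by blast
  qed
  have attained: "?d t \<in> ?W" if t: "t < K" for t
  proof -
    have "?d t \<in> nonzero_weights (blocks t) n"
      using finite_nonzero_weights nonzero_weights_nonempty[OF n_pos] by (rule Min_in)
    then obtain w where w: "w \<in> carrier_vec n" "w \<noteq> 0\<^sub>v n" "?d t = hweight (sys_codeword (blocks t) n w)"
      unfolding nonzero_weights_def by blast
    have "hweight (sys_codeword blockdiag M (embed t w)) \<in> ?W"
      unfolding nonzero_weights_def using embed_carrier embed_nonzero[OF w(1,2) t] by blast
    then show ?thesis
      using hweight_embed[OF w(1) t] w(3) by simp
  qed
  have "Min ?W = (MIN t\<in>{..<K}. ?d t)"
  proof (rule antisym)
    have "(MIN t\<in>{..<K}. ?d t) \<in> ?d ` {..<K}"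
      using assms by (intro Min_in) auto
    then obtain t where t: "t < K" "(MIN t\<in>{..<K}. ?d t) = ?d t"
      by auto
    show "Min ?W \<le> (MIN t\<in>{..<K}. ?d t)"
      unfolding t(2) using attained[OF t(1)] by (rule Min_le[OF finite_nonzero_weights])
    have "?W \<noteq> {}"
      using attained[OF assms] by blast
    then have "Min ?W \<in> ?W"
      by (rule Min_in[OF finite_nonzero_weights])
    then obtain t' where "t' < K" "?d t' \<le> Min ?W"
      using below by blast
    then show "(MIN t\<in>{..<K}. ?d t) \<le> Min ?W"
      by (meson Min_le finite_imageI finite_lessThan imageI lessThan_iff order_trans)
  qed
  then show ?thesis
    by (simp add: min_dist_sys_code)
qed

lemma rev_index_block: "t < K \<Longrightarrow> i < n \<Longrightarrow> rev_index (t * n + i) = t * n + (n - 1 - i)"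
  by (simp add: rev_index_def block_index_div)

lemma rev_index_less_involution:
  assumes "I < M"
  shows "rev_index I < M" and "rev_index (rev_index I) = I"
proof -
  obtain t i where I: "t < K" "i < n" "I = t * n + i"
    using assms by (rule block_index_cases)
  moreover have i': "n - 1 - i < n"
    using n_pos by simp
  ultimately show "rev_index I < M"
    by (simp only: rev_index_block block_index_less)
  from I i' show "rev_index (rev_index I) = I"
    by (simp only: rev_index_block)
qed

lemma blockdiag_rev_index_symmetric:
  assumes persym: "\<And>t. t < K \<Longrightarrow> persymmetric n (blocks t)" and "I < M" "J < M"
  shows "blockdiag $$ (rev_index I, J) = blockdiag $$ (rev_index J, I)"
proof -
  obtain t i where I: "t < K" "i < n" "I = t * n + i"
    using \<open>I < M\<close> by (rule block_index_cases)
  obtain t' j where J: "t' < K" "j < n" "J = t' * n + j"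
    using \<open>J < M\<close> by (rule block_index_cases)
  have i': "n - 1 - i < n" and j': "n - 1 - j < n"
    using n_pos by auto
  have "blockdiag $$ (rev_index I, J) = (if t = t' then blocks t $$ (n - 1 - i, j) else 0)"
    unfolding I(3) J(3) rev_index_block[OF I(1,2)] by (rule blockdiag_index[OF I(1) i' J(1,2)])
  also have "\<dots> = (if t' = t then blocks t' $$ (n - 1 - j, i) else 0)"
    using persymmetric_reversal_symmetric[OF persym[OF I(1)] I(2) J(2)] by auto
  also have "\<dots> = blockdiag $$ (rev_index J, I)"
    unfolding I(3) J(3) rev_index_block[OF J(1,2)] by (rule blockdiag_index[OF J(1) j' I(1,2), symmetric])
  finally show ?thesis .
qed

end

section \<open>The Euclidean and Hermitian conjugations\<close>

lemma power_card_eq_self: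
  fixes x :: "'a::{finite,field}"
  shows "x ^ card (UNIV :: 'a set) = x"
proof (cases "x = 0")
  case True
  then show ?thesis by (simp add: finite_UNIV_card_ge_0)
next
  case False
  let ?U = "UNIV - {0::'a}"
  \<comment> \<open>multiplication by \<open>x\<close> permutes the nonzero elements\<close>
  have "bij_betw (\<lambda>y. x * y) ?U ?U"
    by (rule bij_betw_byWitness[where f' = "\<lambda>y. y / x"]) (use False in auto)
  then have "(\<Prod>y\<in>?U. x * y) = (\<Prod>y\<in>?U. y)"
    by (rule prod.reindex_bij_betw)
  then have "x ^ card ?U * (\<Prod>y\<in>?U. y) = 1 * (\<Prod>y\<in>?U. y)"
    by (simp add: prod.distrib)
  then have one: "x ^ card ?U = 1"
    by (subst (asm) mult_cancel_right) simp
  have "card (UNIV :: 'a set) = Suc (card ?U)"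
    using finite_UNIV_card_ge_0[where ?'a = 'a] by (simp add: card_Diff_singleton)
  then have "x ^ card (UNIV :: 'a set) = x ^ card ?U * x"
    by (simp only: power_Suc2)
  with one show ?thesis
    by (simp only: mult_1)
qed

lemma power_sqrt_card_involution:
  fixes x :: "'a::{finite,field}"
  assumes "card (UNIV :: 'a set) = p ^ (2 * m)"
  shows "(x ^ p ^ m) ^ p ^ m = x"
proof -
  have "(x ^ p ^ m) ^ p ^ m = x ^ (p ^ m * p ^ m)"
    by (rule power_mult[symmetric])
  also have "p ^ m * p ^ m = card (UNIV :: 'a set)"
    using assms by (simp add: power_add[symmetric] mult_2)
  finally show ?thesis
    by (simp only: power_card_eq_self)
qed

lemma conjugation_involution:
  fixes \<sigma> :: "'a::{finite,field} \<Rightarrow> 'a"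
  assumes "\<sigma> = (\<lambda>y. y) \<or>
    (\<exists>(p::nat) m. prime p \<and> m \<ge> 1 \<and> card (UNIV :: 'a set) = p ^ (2 * m) \<and> \<sigma> = (\<lambda>y. y ^ (p ^ m)))"
  shows "\<sigma> (\<sigma> y) = y \<and> \<sigma> 0 = 0"
  using assms
proof
  assume "\<exists>(p::nat) m. prime p \<and> m \<ge> 1 \<and> card (UNIV :: 'a set) = p ^ (2 * m) \<and> \<sigma> = (\<lambda>y. y ^ (p ^ m))"
  then obtain p m :: nat where "prime p" "card (UNIV :: 'a set) = p ^ (2 * m)" "\<sigma> = (\<lambda>y. y ^ (p ^ m))"
    by blast
  then show ?thesis
    using power_sqrt_card_involution prime_gt_0_nat by simp
qed simp

lemma image_if_less_halves:
  fixes s :: nat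
  assumes "0 < s"
  shows "(\<lambda>t. if t < s then a else b) ` {..<2 * s} = {a, b}"
proof
  show "(\<lambda>t. if t < s then a else b) ` {..<2 * s} \<subseteq> {a, b}"
    by auto
  have "a \<in> (\<lambda>t. if t < s then a else b) ` {..<2 * s}"
    using assms by (intro image_eqI[of _ _ 0]) auto
  moreover have "b \<in> (\<lambda>t. if t < s then a else b) ` {..<2 * s}"
    using assms by (intro image_eqI[of _ _ s]) auto
  ultimately show "{a, b} \<subseteq> (\<lambda>t. if t < s then a else b) ` {..<2 * s}"
    by blast
qed

theorem LCD_formally_self_dual_block_code:
  fixes B\<^sub>1 B\<^sub>2 :: "'a::field mat"
  assumes "0 < n" "0 < s"
    and B\<^sub>1: "B\<^sub>1 \<in> carrier_mat n n" "persymmetric n B\<^sub>1" "is_LCD \<sigma> (2 * n) (sys_code B\<^sub>1 n)"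
    and B\<^sub>2: "B\<^sub>2 \<in> carrier_mat n n" "persymmetric n B\<^sub>2" "is_LCD \<sigma> (2 * n) (sys_code B\<^sub>2 n)"
    and \<sigma>: "\<And>y. \<sigma> (\<sigma> y) = y" "\<sigma> 0 = 0"
  shows "\<exists>C. is_linear_code (4 * s * n) (2 * s * n) C \<and>
           min_dist C = min (min_dist (sys_code B\<^sub>1 n)) (min_dist (sys_code B\<^sub>2 n)) \<and>
           formally_self_dual \<sigma> (4 * s * n) C \<and> is_LCD \<sigma> (4 * s * n) C"
proof -
  define blocks where "blocks = (\<lambda>t. if t < s then B\<^sub>1 else B\<^sub>2)"
  interpret D: block_diag_code n "2 * s" blocks
    using assms by unfold_locales (simp_all add: blocks_def)
  interpret S: symmetric_sys_code D.blockdiag D.M D.rev_index \<sigma>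
    using D.rev_index_less_involution D.blockdiag_rev_index_symmetric B\<^sub>1 B\<^sub>2 \<sigma>
    by unfold_locales (simp_all add: blocks_def)
  have "(\<lambda>t. min_dist (sys_code (blocks t) n)) ` {..<2 * s} = (\<lambda>B. min_dist (sys_code B n)) ` {B\<^sub>1, B\<^sub>2}"
    unfolding image_if_less_halves[OF \<open>0 < s\<close>, symmetric] blocks_def by (rule image_image[symmetric])
  then have "min_dist (sys_code D.blockdiag D.M) = min (min_dist (sys_code B\<^sub>1 n)) (min_dist (sys_code B\<^sub>2 n))"
    using D.min_dist_blockdiag \<open>0 < s\<close> by simp
  moreover have "is_LCD \<sigma> (2 * D.M) (sys_code D.blockdiag D.M)"
    using D.is_LCD_blockdiag \<sigma>(2) B\<^sub>1(3) B\<^sub>2(3) by (simp add: blocks_def)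
  moreover have "2 * s * n = D.M" "4 * s * n = 2 * D.M"
    by (simp_all add: D.M_def)
  ultimately show ?thesis
    using is_linear_code_sys_code[OF D.blockdiag_carrier] S.formally_self_dual_sys_code by metis
qed

theorem theorem5:
  fixes n :: nat
    and f1 f2 :: "'a::{finite,field} poly"
    and A1 A2 :: "'a mat"
    and \<sigma> :: "'a \<Rightarrow> 'a"
  assumes n: "n \<ge> 1"
    and T1: "toeplitz n A1" and T2: "toeplitz n A2"
    and form: "\<sigma> = (\<lambda>y. y) \<or>
       (\<exists>(p::nat) m. prime p \<and> m \<ge> 1 \<and> card (UNIV :: 'a set) = p ^ (2 * m) \<and> \<sigma> = (\<lambda>y. y ^ (p ^ m)))"
    and L1: "is_LCD \<sigma> (2 * n) (row_space (id_block n (poly_mat n f1 A1)))"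
    and L2: "is_LCD \<sigma> (2 * n) (row_space (id_block n (poly_mat n f2 A2)))"
  shows "\<forall>s::nat. s \<ge> 1 \<longrightarrow> (\<exists>C :: 'a vec set.
           is_linear_code (4 * s * n) (2 * s * n) C \<and>
           min_dist C = min (min_dist (row_space (id_block n (poly_mat n f1 A1))))
                            (min_dist (row_space (id_block n (poly_mat n f2 A2)))) \<and>
           formally_self_dual \<sigma> (4 * s * n) C \<and>
           is_LCD \<sigma> (4 * s * n) C)"
proof (intro allI impI)
  fix s :: nat assume "s \<ge> 1"
  have A: "A1 \<in> carrier_mat n n" "A2 \<in> carrier_mat n n"
    using T1 T2 unfolding toeplitz_def by blast+
  have B: "poly_mat n f1 A1 \<in> carrier_mat n n" "poly_mat n f2 A2 \<in> carrier_mat n n"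
    by (simp_all add: poly_mat_def)
  have "persymmetric n (poly_mat n f1 A1)" "persymmetric n (poly_mat n f2 A2)"
    using persymmetric_poly_mat[OF A(1) toeplitz_imp_persymmetric[OF T1]]
      persymmetric_poly_mat[OF A(2) toeplitz_imp_persymmetric[OF T2]] .
  moreover note L1 L2
  ultimately show "\<exists>C :: 'a vec set.
           is_linear_code (4 * s * n) (2 * s * n) C \<and>
           min_dist C = min (min_dist (row_space (id_block n (poly_mat n f1 A1))))
                            (min_dist (row_space (id_block n (poly_mat n f2 A2)))) \<and>
           formally_self_dual \<sigma> (4 * s * n) C \<and>
           is_LCD \<sigma> (4 * s * n) C"
    using n \<open>s \<ge> 1\<close> B conjugation_involution[OF form]
    unfolding row_space_id_block[OF B(1)] row_space_id_block[OF B(2)]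
    by (intro LCD_formally_self_dual_block_code) auto
qed

end
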